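(* Let $G$ and $H$ be graphs such that the direct product $G\times H$ is a balanced distance magic graph, and let $\ell$ be a balanced distance magic labeling of $G\times H$ in which $(g,h)$ and $(g',h)$ are twins and also $(g,h_1)$ and $(g,h_2)$ are twins. Let $\widehat\ell$ be obtained from $\ell$ by exchanging the labels of $(g,h_2)$ and $(g',h_1)$, i.e. $\widehat\ell(g,h_2)=\ell(g',h_1)$, $\widehat\ell(g',h_1)=\ell(g,h_2)$, and $\widehat\ell(a,b)=\ell(a,b)$ for all other vertices. Then $\widehat\ell$ is a balanced distance magic labeling of $G\times H$ in which $(g,h_1)$ and $(g',h_1)$ are twins.
   Context: All graphs are finite and simple. For a graph $G$ and vertex $x$, $N(x)=N_G(x)$ is the (open) neighborhood of $x$. A distance magic labeling of a graph $G$ of order $N$ is a bijection $\ell\colon V(G)\to\{1,\dots,N\}$ for which there is a constant $k$ such that the weight $w(x)=\sum_{y\in N(x)}\ell(y)$ equals $k$ for every $x\in V(G)$. A balanced distance magic labeling of a graph $G$ with an even number $N$ of vertices is a distance magic labeling $\ell$ such that for every $w\in V(G)$: whenever $u\in N(w)$ has $\ell(u)=i$, there is $v\in N(w)$ with $\ell(v)=N+1-i$. Under such $\ell$, the vertices labeled $i$ and $N+1-i$ are called twins (with respect to $\ell$). $G$ is a balanced distance magic graph if it has an even number of vertices and admits a balanced distance magic labeling. The direct product $G\times H$ has vertex set $V(G)\times V(H)$, with $(g,h)$ adjacent to $(g',h')$ iff $gg'\in E(G)$ and $hh'\in E(H)$. *)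

theory Defs
  imports Main
begin

definition simple_graph :: "'a set \<Rightarrow> ('a \<Rightarrow> 'a \<Rightarrow> bool) \<Rightarrow> bool" where
  "simple_graph V E \<longleftrightarrow> finite V \<and> (\<forall>x y. E x y \<longrightarrow> x \<in> V \<and> y \<in> V)
     \<and> (\<forall>x y. E x y \<longrightarrow> E y x) \<and> (\<forall>x. \<not> E x x)"

definition nbhd :: "'a set \<Rightarrow> ('a \<Rightarrow> 'a \<Rightarrow> bool) \<Rightarrow> 'a \<Rightarrow> 'a set" where
  "nbhd V E x = {y \<in> V. E x y}"

definition dprod_V :: "'a set \<Rightarrow> 'b set \<Rightarrow> ('a \<times> 'b) set" where
  "dprod_V VG VH = VG \<times> VH"

definition dprod_E :: "('a \<Rightarrow> 'a \<Rightarrow> bool) \<Rightarrow> ('b \<Rightarrow> 'b \<Rightarrow> bool) \<Rightarrow> ('a \<times> 'b) \<Rightarrow> ('a \<times> 'b) \<Rightarrow> bool" where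
  "dprod_E EG EH p q \<longleftrightarrow> EG (fst p) (fst q) \<and> EH (snd p) (snd q)"

definition distance_magic :: "'a set \<Rightarrow> ('a \<Rightarrow> 'a \<Rightarrow> bool) \<Rightarrow> ('a \<Rightarrow> nat) \<Rightarrow> bool" where
  "distance_magic V E l \<longleftrightarrow> bij_betw l V {1..card V}
     \<and> (\<exists>k. \<forall>x\<in>V. (\<Sum>y\<in>nbhd V E x. l y) = k)"

definition balanced_distance_magic :: "'a set \<Rightarrow> ('a \<Rightarrow> 'a \<Rightarrow> bool) \<Rightarrow> ('a \<Rightarrow> nat) \<Rightarrow> bool" where
  "balanced_distance_magic V E l \<longleftrightarrow> even (card V) \<and> distance_magic V E l
     \<and> (\<forall>w\<in>V. \<forall>u\<in>nbhd V E w. \<exists>v\<in>nbhd V E w. l v = card V + 1 - l u)"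

definition twins :: "'a set \<Rightarrow> ('a \<Rightarrow> nat) \<Rightarrow> 'a \<Rightarrow> 'a \<Rightarrow> bool" where
  "twins V l x y \<longleftrightarrow> x \<in> V \<and> y \<in> V \<and> l x + l y = card V + 1"

end

theory Submission
  imports Defs "HOL-Combinatorics.Transposition"
begin

(* Exchanging the labels of two vertices p and q is precomposition
   of the labelling with the transposition of p and q.  Such an exchange keeps a
   balanced distance magic labelling balanced distance magic as soon as every
   neighbourhood contains either both of p, q or neither of them: each
   neighbourhood is then mapped onto itself, so neighbourhood sums and the
   pairing of twins inside neighbourhoods are unchanged.
   In a balanced distance magic graph twins lie in exactly the same
   neighbourhoods.  In the direct product G x H, twins (g,h), (g',h) moreover
   force g and g' to have the same G-neighbours, so (g,c) and (g',c) lie in the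
   same neighbourhoods for every c.  Taking p = (g,h2) and q = (g',h1), the
   vertex p is a twin of (g,h1), which in turn shares its neighbourhoods with q. *)

lemma twins_sym: "twins V l x y \<Longrightarrow> twins V l y x"
  by (auto simp: twins_def)

text \<open>On an even number of vertices no vertex is its own twin, since
  N + 1 is odd.\<close>
lemma twins_distinct:
  assumes "even (card V)" and "twins V l x y"
  shows "x \<noteq> y"
proof
  assume "x = y"
  with assms(2) have "2 * l x = card V + 1" by (simp add: twins_def)
  with assms(1) show False by presburger
qed

text \<open>A neighbourhood containing a vertex also contains its twin: the balancing
  condition provides a neighbour with the complementary label, and injectivity
  of the labelling identifies that neighbour with the twin.\<close>
lemma twin_in_nbhd:
  assumes bdm: "balanced_distance_magic V E l"
    and "w \<in> V" and u: "u \<in> nbhd V E w" and tw: "twins V l u y"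
  shows "y \<in> nbhd V E w"
proof -
  have inj: "inj_on l V"
    using bdm by (simp add: balanced_distance_magic_def distance_magic_def bij_betw_def)
  obtain v where v: "v \<in> nbhd V E w" "l v = card V + 1 - l u"
    using bdm \<open>w \<in> V\<close> u by (auto simp: balanced_distance_magic_def)
  have "l v = l y" "v \<in> V" "y \<in> V"
    using v tw by (auto simp: twins_def nbhd_def)
  then have "v = y" using inj by (simp add: inj_on_def)
  with v show ?thesis by simp
qed

lemma twins_same_nbhds:
  assumes "balanced_distance_magic V E l" and "w \<in> V" and "twins V l x y"
  shows "x \<in> nbhd V E w \<longleftrightarrow> y \<in> nbhd V E w"
  using twin_in_nbhd[OF assms(1,2) _ assms(3)]
    twin_in_nbhd[OF assms(1,2) _ twins_sym[OF assms(3)]] by blast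

text \<open>Labels are positive, so a single nonempty neighbourhood makes the magic
  constant positive, and then no neighbourhood can be empty.\<close>
lemma distance_magic_nbhd_nonempty:
  assumes "finite V" and dm: "distance_magic V E l"
    and "w \<in> V" and x: "x \<in> nbhd V E w" and "z \<in> V"
  shows "nbhd V E z \<noteq> {}"
proof
  assume empty: "nbhd V E z = {}"
  obtain k where k: "\<And>y. y \<in> V \<Longrightarrow> (\<Sum>u\<in>nbhd V E y. l u) = k"
    using dm by (auto simp: distance_magic_def)
  have "1 \<le> l x"
    using dm x by (auto simp: distance_magic_def bij_betw_def nbhd_def)
  also have "\<dots> \<le> (\<Sum>u\<in>nbhd V E w. l u)"
    using x \<open>finite V\<close> by (intro member_le_sum) (auto simp: nbhd_def)
  also have "\<dots> = (\<Sum>u\<in>nbhd V E z. l u)"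
    using k \<open>w \<in> V\<close> \<open>z \<in> V\<close> by simp
  finally show False using empty by simp
qed

lemma balanced_distance_magic_transpose:
  assumes bdm: "balanced_distance_magic V E l"
    and "p \<in> V" and "q \<in> V"
    and same: "\<And>w. w \<in> V \<Longrightarrow> p \<in> nbhd V E w \<longleftrightarrow> q \<in> nbhd V E w"
  shows "balanced_distance_magic V E (l \<circ> transpose p q)"
proof -
  let ?t = "transpose p q"
  have bij: "bij_betw l V {1..card V}"
    using bdm by (simp add: balanced_distance_magic_def distance_magic_def)
  obtain k where k: "\<And>x. x \<in> V \<Longrightarrow> (\<Sum>y\<in>nbhd V E x. l y) = k"
    using bdm by (auto simp: balanced_distance_magic_def distance_magic_def)
  have image: "?t ` nbhd V E w = nbhd V E w" if "w \<in> V" for w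
    using same[OF that] by simp
  have in_nbhd: "?t u \<in> nbhd V E w" if "w \<in> V" "u \<in> nbhd V E w" for w u
    using image[OF that(1)] that(2) by blast
  have "bij_betw (l \<circ> ?t) V {1..card V}"
    using \<open>p \<in> V\<close> \<open>q \<in> V\<close> by (intro bij_betw_trans[OF _ bij]) simp
  moreover have "(\<Sum>y\<in>nbhd V E x. (l \<circ> ?t) y) = k" if "x \<in> V" for x
    using sum.reindex[OF inj_on_transpose, of l p q "nbhd V E x"] image[OF that] k[OF that]
    by simp
  moreover have "\<exists>v\<in>nbhd V E w. (l \<circ> ?t) v = card V + 1 - (l \<circ> ?t) u"
    if wu: "w \<in> V" "u \<in> nbhd V E w" for w u
  proof -
    obtain v where "v \<in> nbhd V E w" "l v = card V + 1 - l (?t u)"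
      using bdm wu in_nbhd[OF wu] by (auto simp: balanced_distance_magic_def)
    then show ?thesis
      using in_nbhd[OF wu(1)] by (intro bexI[of _ "?t v"]) auto
  qed
  ultimately show ?thesis
    using bdm by (auto simp: balanced_distance_magic_def distance_magic_def)
qed

lemma nbhd_dprod:
  "x \<in> nbhd (dprod_V VG VH) (dprod_E EG EH) (a, b)
     \<longleftrightarrow> x \<in> dprod_V VG VH \<and> EG a (fst x) \<and> EH b (snd x)"
  by (simp add: nbhd_def dprod_V_def dprod_E_def)

text \<open>In a direct product with a balanced distance magic labelling, twins
  (g,h) and (g',h) in a common column force g and g' to have the same
  G-neighbours, so (g,c) and (g',c) lie in the same neighbourhoods.  The
  H-neighbour d of h needed to see this exists because no neighbourhood is
  empty once one is not.\<close>
lemma dprod_twins_shift_nbhd: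
  assumes G: "simple_graph VG EG" and H: "simple_graph VH EH"
    and bdm: "balanced_distance_magic (dprod_V VG VH) (dprod_E EG EH) l"
    and tw: "twins (dprod_V VG VH) l (g, h) (g', h)"
    and w: "w \<in> dprod_V VG VH"
    and gc: "(g, c) \<in> nbhd (dprod_V VG VH) (dprod_E EG EH) w"
  shows "(g', c) \<in> nbhd (dprod_V VG VH) (dprod_E EG EH) w"
proof -
  let ?V = "dprod_V VG VH" and ?E = "dprod_E EG EH"
  obtain a b where ab: "w = (a, b)" by force
  have gh: "(g, h) \<in> ?V" and g'h: "(g', h) \<in> ?V"
    using tw by (auto simp: twins_def)
  have fin: "finite ?V"
    using G H by (simp add: simple_graph_def dprod_V_def)
  have dm: "distance_magic ?V ?E l"
    using bdm by (simp add: balanced_distance_magic_def)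
  have "nbhd ?V ?E (g, h) \<noteq> {}"
    using distance_magic_nbhd_nonempty[OF fin dm w gc gh] .
  then obtain e d where "(e, d) \<in> nbhd ?V ?E (g, h)"
    by auto
  then have hd: "EH h d" and d: "d \<in> VH"
    unfolding nbhd_dprod by (simp_all add: dprod_V_def)
  have "a \<in> VG"
    using w by (simp add: ab dprod_V_def)
  have "EG a g" "EH b c" "(g, c) \<in> ?V"
    using gc by (simp_all add: ab nbhd_dprod)
  have "EH d h"
    using H hd by (simp add: simple_graph_def)
  then have "(g, h) \<in> nbhd ?V ?E (a, d)"
    using gh \<open>EG a g\<close> by (simp add: nbhd_dprod)
  moreover have "(a, d) \<in> ?V"
    using \<open>a \<in> VG\<close> d by (simp add: dprod_V_def)
  ultimately have "(g', h) \<in> nbhd ?V ?E (a, d)"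
    using twin_in_nbhd[OF bdm _ _ tw] by blast
  moreover have "(g', c) \<in> ?V"
    using g'h \<open>(g, c) \<in> ?V\<close> by (simp add: dprod_V_def)
  ultimately show ?thesis
    using \<open>EH b c\<close> by (simp add: ab nbhd_dprod)
qed

theorem lemma2:
  fixes VG :: "'a set" and EG :: "'a \<Rightarrow> 'a \<Rightarrow> bool"
    and VH :: "'b set" and EH :: "'b \<Rightarrow> 'b \<Rightarrow> bool"
    and l :: "'a \<times> 'b \<Rightarrow> nat" and g g' :: 'a and h h1 h2 :: 'b
  assumes "simple_graph VG EG" and "simple_graph VH EH"
    and "balanced_distance_magic (dprod_V VG VH) (dprod_E EG EH) l"
    and "twins (dprod_V VG VH) l (g, h) (g', h)"
    and "twins (dprod_V VG VH) l (g, h1) (g, h2)"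
  shows "balanced_distance_magic (dprod_V VG VH) (dprod_E EG EH)
           (l((g, h2) := l (g', h1), (g', h1) := l (g, h2)))
       \<and> twins (dprod_V VG VH) (l((g, h2) := l (g', h1), (g', h1) := l (g, h2))) (g, h1) (g', h1)"
proof -
  let ?V = "dprod_V VG VH" and ?E = "dprod_E EG EH"
  note bdm = assms(3) and col = assms(4) and row = assms(5)
  have even: "even (card ?V)"
    using bdm by (simp add: balanced_distance_magic_def)
  have "g \<noteq> g'" "h1 \<noteq> h2"
    using twins_distinct[OF even col] twins_distinct[OF even row] by auto
  have in_V: "(g, h1) \<in> ?V" "(g, h2) \<in> ?V" "(g', h1) \<in> ?V"
    using col row by (auto simp: twins_def dprod_V_def)
  have same: "(g, h2) \<in> nbhd ?V ?E w \<longleftrightarrow> (g', h1) \<in> nbhd ?V ?E w" if "w \<in> ?V" for w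
    using twins_same_nbhds[OF bdm that row]
      dprod_twins_shift_nbhd[OF assms(1,2) bdm col that, of h1]
      dprod_twins_shift_nbhd[OF assms(1,2) bdm twins_sym[OF col] that, of h1]
    by blast
  have "l((g, h2) := l (g', h1), (g', h1) := l (g, h2)) = l \<circ> transpose (g, h2) (g', h1)"
    by (simp add: fun_eq_iff)
  then have "balanced_distance_magic ?V ?E (l((g, h2) := l (g', h1), (g', h1) := l (g, h2)))"
    using balanced_distance_magic_transpose[OF bdm in_V(2,3) same] by simp
  \<comment> \<open>(g,h1) keeps its label and (g',h1) receives the label of its old twin (g,h2).\<close>
  moreover have "twins ?V (l((g, h2) := l (g', h1), (g', h1) := l (g, h2))) (g, h1) (g', h1)"
  proof -
    have "l (g, h1) + l (g, h2) = card ?V + 1"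
      using row by (simp add: twins_def)
    then show ?thesis
      using in_V \<open>g \<noteq> g'\<close> \<open>h1 \<noteq> h2\<close> unfolding twins_def by simp
  qed
  ultimately show ?thesis ..
qed

end
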